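(* Let $p\ge 1$, let $\alpha\in[0,1]$ and let $g\in\mathbb{R}^p$ with $g\neq 0$. Let $m$ be an index with $|g_m|=\max_d|g_d|$, and let $I_{12}$ be the $p\times p$ diagonal matrix with $(I_{12})_{dd}=1$ if $|g_d|\ge \alpha|g_m|$ and $(I_{12})_{dd}=0$ otherwise. Let $p_1:=\sum_{d=1}^p (I_{12})_{dd}$ (so $1\le p_1\le p$), let $$\Delta x_{12}:=-I_{12}g\left(\frac{\alpha}{\|I_{12}g\|_1}+\frac{1-\alpha}{\|I_{12}g\|_2}\right),$$ and let $h_\alpha(v):=\alpha\|v\|_1+(1-\alpha)\|v\|_2^2$. Then $$0.61<1-\alpha(1-\alpha)(2-\alpha)\left(1-\frac 1{p_1}\right)\le h_\alpha(\Delta x_{12})\le 1+\alpha(1-\alpha)(\sqrt{p_1}-1)\le 1+\frac{\sqrt{p_1}-1}{4}.$$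
   Context: $\Delta x_{12}$ is the (non-scaled) elastic gradient descent update direction; $p_1$ is the number of coordinates updated. *)

theory Defs
  imports "HOL-Analysis.Analysis"
begin

definition l1norm :: "real^'n \<Rightarrow> real" where
  "l1norm v = (\<Sum>i\<in>UNIV. \<bar>v $ i\<bar>)"

definition h_alpha :: "real \<Rightarrow> real^'n \<Rightarrow> real" where
  "h_alpha \<alpha> v = \<alpha> * l1norm v + (1 - \<alpha>) * (norm v)^2"

definition I12 :: "real \<Rightarrow> real^'n \<Rightarrow> 'n \<Rightarrow> real^'n^'n" where
  "I12 \<alpha> g m = (\<chi> i j. if i = j \<and> \<bar>g $ i\<bar> \<ge> \<alpha> * \<bar>g $ m\<bar> then 1 else 0)"

end

theory Submission
  imports Defs
begin

text \<open>Write \<open>v = I12 g\<close>, \<open>a = \<parallel>v\<parallel>\<^sub>1\<close>, \<open>b = \<parallel>v\<parallel>\<^sub>2\<close> and \<open>r = a / b\<close>, so that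
  \<open>1 \<le> r \<le> sqrt p1\<close> by Cauchy-Schwarz on the \<open>p1\<close> selected coordinates. The step is
  \<open>-c v\<close> with \<open>c = \<alpha>/a + (1-\<alpha>)/b\<close>, and \<open>h\<^sub>\<alpha>\<close> of it is a function of \<open>r\<close> alone:
  \<open>h - 1 = \<alpha>(1-\<alpha>)((r-1) - (1-1/r)(\<alpha>/r + 2 - \<alpha>))\<close>. Both bounds are read off this identity;
  the constant 0.61 comes from the maximum \<open>2/(3 sqrt 3) < 0.39\<close> of \<open>x(1-x)(2-x)\<close> on \<open>[0,1]\<close>.\<close>

lemma mult_one_minus_le_quarter:
  fixes x :: real
  shows "x * (1 - x) \<le> 1 / 4"
proof -
  have "0 \<le> (x - 1 / 2)\<^sup>2" by simp
  then show ?thesis by (simp add: power2_eq_square algebra_simps)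
qed

lemma unit_interval_cubic_less:
  fixes x :: real
  assumes "0 \<le> x" and "x \<le> 1"
  shows "x * (1 - x) * (2 - x) < 39 / 100"
proof (cases "x \<le> 0.9")
  case True
  \<comment> \<open>a sum-of-nonnegatives certificate around the approximate maximiser \<open>x \<approx> 0.42\<close>\<close>
  have "x * (1 - x) * (2 - x) = 39/100 - ((x - 42/100)\<^sup>2 * (216/100 - x) + 8976/1000000 - 92/10000 * x)"
    by (simp add: power2_eq_square field_simps)
  moreover have "0 \<le> (x - 42/100)\<^sup>2 * (216/100 - x)" using True by simp
  ultimately show ?thesis using True by linarith
next
  case False
  have "x * (1 - x) \<le> 1 * (1 - x)" using assms by (intro mult_right_mono) auto
  then have "x * (1 - x) \<le> 1 / 10" using False by simp
  moreover have "0 \<le> x * (1 - x)" using assms by simp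
  ultimately have "x * (1 - x) * (2 - x) \<le> 1 / 10 * (2 - x)" using assms by (intro mult_right_mono) auto
  then show ?thesis using False by simp
qed

lemma elastic_value_minus_one:
  fixes \<alpha> r :: real
  assumes "r \<noteq> 0"
  shows "\<alpha> * (\<alpha> + (1 - \<alpha>) * r) + (1 - \<alpha>) * (\<alpha> / r + (1 - \<alpha>))\<^sup>2 - 1
    = \<alpha> * (1 - \<alpha>) * ((r - 1) - (1 - 1 / r) * (\<alpha> / r + 2 - \<alpha>))"
  using assms by (simp add: field_simps power2_eq_square)

lemma elastic_value_le:
  fixes \<alpha> r p :: real
  assumes "0 \<le> \<alpha>" and "\<alpha> \<le> 1" and "1 \<le> r" and "r \<le> sqrt p"
  shows "\<alpha> * (\<alpha> + (1 - \<alpha>) * r) + (1 - \<alpha>) * (\<alpha> / r + (1 - \<alpha>))\<^sup>2 \<le> 1 + \<alpha> * (1 - \<alpha>) * (sqrt p - 1)"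
proof -
  have "0 \<le> \<alpha> / r" using assms by simp
  then have "0 \<le> \<alpha> / r + 2 - \<alpha>" using assms(2) by linarith
  moreover have "0 \<le> 1 - 1 / r" using assms(3) by simp
  ultimately have "0 \<le> (1 - 1 / r) * (\<alpha> / r + 2 - \<alpha>)" by simp
  then have "(r - 1) - (1 - 1 / r) * (\<alpha> / r + 2 - \<alpha>) \<le> sqrt p - 1" using assms(4) by linarith
  then have "\<alpha> * (1 - \<alpha>) * ((r - 1) - (1 - 1 / r) * (\<alpha> / r + 2 - \<alpha>)) \<le> \<alpha> * (1 - \<alpha>) * (sqrt p - 1)"
    using assms(1,2) by (intro mult_left_mono) auto
  then show ?thesis using elastic_value_minus_one[of r \<alpha>] assms(3) by simp
qed

lemma elastic_value_ge:
  fixes \<alpha> r p :: real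
  assumes "0 \<le> \<alpha>" and "\<alpha> \<le> 1" and "1 \<le> r" and "r \<le> sqrt p"
  shows "1 - \<alpha> * (1 - \<alpha>) * (2 - \<alpha>) * (1 - 1 / p)
    \<le> \<alpha> * (\<alpha> + (1 - \<alpha>) * r) + (1 - \<alpha>) * (\<alpha> / r + (1 - \<alpha>))\<^sup>2"
proof -
  have "1 \<le> sqrt p" using assms(3,4) by linarith
  then have "1 \<le> p" by simp
  then have "sqrt p \<le> p" by (intro real_le_lsqrt) (auto simp: power2_eq_square)
  then have "1 / p \<le> 1 / r" using assms(3,4) by (intro divide_left_mono) auto
  moreover have "1 - 1 / p \<le> (2 - \<alpha>) * (1 - 1 / p)"
    using assms(2) \<open>1 \<le> p\<close> by (simp add: mult_le_cancel_right1)
  ultimately have "1 - 1 / r \<le> (2 - \<alpha>) * (1 - 1 / p)" by linarith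
  moreover have "1 - 1 / r \<le> r - 1"
  proof -
    have "(r - 1) - (1 - 1 / r) = (r - 1) * (1 - 1 / r)" using assms(3) by (simp add: field_simps)
    moreover have "0 \<le> (r - 1) * (1 - 1 / r)" using assms(3) by simp
    ultimately show ?thesis by linarith
  qed
  moreover have "(1 - 1 / r) * (1 - \<alpha> + \<alpha> / r) \<le> 1 - 1 / r"
    using assms(1,2,3) by (intro mult_left_le) (auto simp: divide_le_eq mult_le_cancel_left1)
  moreover have "(1 - 1 / r) * (\<alpha> / r + 2 - \<alpha>) = (1 - 1 / r) + (1 - 1 / r) * (1 - \<alpha> + \<alpha> / r)"
    by (simp add: algebra_simps)
  ultimately have "- ((2 - \<alpha>) * (1 - 1 / p)) \<le> (r - 1) - (1 - 1 / r) * (\<alpha> / r + 2 - \<alpha>)"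
    by linarith
  then have "\<alpha> * (1 - \<alpha>) * - ((2 - \<alpha>) * (1 - 1 / p))
      \<le> \<alpha> * (1 - \<alpha>) * ((r - 1) - (1 - 1 / r) * (\<alpha> / r + 2 - \<alpha>))"
    using assms(1,2) by (intro mult_left_mono) auto
  then show ?thesis using elastic_value_minus_one[of r \<alpha>] assms(3) by simp
qed

lemma l1norm_scaleR: "l1norm (c *\<^sub>R v) = \<bar>c\<bar> * l1norm v"
  by (simp add: l1norm_def abs_mult sum_distrib_left)

lemma l1norm_uminus: "l1norm (- v) = l1norm v"
  by (simp add: l1norm_def)

lemma norm_le_l1norm: "norm v \<le> l1norm v"
  unfolding l1norm_def by (rule norm_le_l1_cart)

lemma l1norm_le_sqrt_card_mult_norm:
  fixes v :: "real^'n"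
  assumes "\<And>i. i \<notin> S \<Longrightarrow> v $ i = 0"
  shows "l1norm v \<le> sqrt (card S) * norm v"
proof -
  have "l1norm v = (\<Sum>i\<in>UNIV. \<bar>of_bool (i \<in> S)\<bar> * \<bar>v $ i\<bar>)"
    unfolding l1norm_def using assms by (intro sum.cong) auto
  also have "\<dots> \<le> L2_set (\<lambda>i. of_bool (i \<in> S)) UNIV * L2_set (\<lambda>i. v $ i) UNIV"
    by (rule L2_set_mult_ineq)
  also have "L2_set (\<lambda>i. of_bool (i \<in> S) :: real) UNIV = sqrt (card S)"
    by (simp add: L2_set_def power2_eq_square)
  also have "L2_set (\<lambda>i. v $ i) UNIV = norm v" by (simp add: norm_vec_def L2_set_def)
  finally show ?thesis .
qed

definition elastic_step :: "real \<Rightarrow> real^'n \<Rightarrow> real^'n" where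
  "elastic_step \<alpha> v = - ((\<alpha> / l1norm v + (1 - \<alpha>) / norm v) *\<^sub>R v)"

lemma h_alpha_elastic_step:
  fixes v :: "real^'n"
  assumes "0 \<le> \<alpha>" and "\<alpha> \<le> 1" and "v \<noteq> 0"
  defines "r \<equiv> l1norm v / norm v"
  shows "h_alpha \<alpha> (elastic_step \<alpha> v) = \<alpha> * (\<alpha> + (1 - \<alpha>) * r) + (1 - \<alpha>) * (\<alpha> / r + (1 - \<alpha>))\<^sup>2"
proof -
  define c where "c = \<alpha> / l1norm v + (1 - \<alpha>) / norm v"
  have b: "0 < norm v" using assms(3) by simp
  then have a: "0 < l1norm v" using norm_le_l1norm[of v] by linarith
  have "0 \<le> c" using assms(1,2) a b by (simp add: c_def)
  then have "h_alpha \<alpha> (elastic_step \<alpha> v) = \<alpha> * (c * l1norm v) + (1 - \<alpha>) * (c * norm v)\<^sup>2"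
    by (simp add: h_alpha_def elastic_step_def c_def[symmetric] l1norm_uminus l1norm_scaleR)
  also have "c * l1norm v = \<alpha> + (1 - \<alpha>) * r" using a b by (simp add: c_def r_def field_simps)
  also have "c * norm v = \<alpha> / r + (1 - \<alpha>)" using a b by (simp add: c_def r_def field_simps)
  finally show ?thesis .
qed

lemma h_alpha_elastic_step_bounds:
  fixes v :: "real^'n"
  assumes "0 \<le> \<alpha>" and "\<alpha> \<le> 1" and "v \<noteq> 0" and "\<And>i. i \<notin> S \<Longrightarrow> v $ i = 0"
  shows "1 - \<alpha> * (1 - \<alpha>) * (2 - \<alpha>) * (1 - 1 / card S) \<le> h_alpha \<alpha> (elastic_step \<alpha> v)"
    and "h_alpha \<alpha> (elastic_step \<alpha> v) \<le> 1 + \<alpha> * (1 - \<alpha>) * (sqrt (card S) - 1)"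
proof -
  define r where "r = l1norm v / norm v"
  have "0 < norm v" using assms(3) by simp
  moreover have "norm v \<le> l1norm v" by (rule norm_le_l1norm)
  moreover have "l1norm v \<le> sqrt (card S) * norm v"
    using assms(4) by (rule l1norm_le_sqrt_card_mult_norm)
  ultimately have "1 \<le> r" and "r \<le> sqrt (card S)"
    by (simp_all add: r_def pos_divide_le_eq)
  moreover have "h_alpha \<alpha> (elastic_step \<alpha> v) = \<alpha> * (\<alpha> + (1 - \<alpha>) * r) + (1 - \<alpha>) * (\<alpha> / r + (1 - \<alpha>))\<^sup>2"
    unfolding r_def using assms(1-3) by (rule h_alpha_elastic_step)
  ultimately show "1 - \<alpha> * (1 - \<alpha>) * (2 - \<alpha>) * (1 - 1 / card S) \<le> h_alpha \<alpha> (elastic_step \<alpha> v)"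
    and "h_alpha \<alpha> (elastic_step \<alpha> v) \<le> 1 + \<alpha> * (1 - \<alpha>) * (sqrt (card S) - 1)"
    using elastic_value_ge[OF assms(1,2)] elastic_value_le[OF assms(1,2)] by simp_all
qed

lemma I12_mult_vec:
  "I12 \<alpha> g m *v g = (\<chi> i. if \<alpha> * \<bar>g $ m\<bar> \<le> \<bar>g $ i\<bar> then g $ i else 0)"
  by (simp add: I12_def matrix_vector_mult_def vec_eq_iff if_distrib[where f="\<lambda>x. x * _"] cong: if_cong)

lemma trace_I12:
  "(\<Sum>d\<in>UNIV. I12 \<alpha> g m $ d $ d) = card {d. \<alpha> * \<bar>g $ m\<bar> \<le> \<bar>g $ d\<bar>}"
  by (simp add: I12_def sum.If_cases)

theorem theorem2:
  fixes g :: "real^'n" and \<alpha> :: real and m :: 'n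
  assumes "0 \<le> \<alpha>" and "\<alpha> \<le> 1" and "g \<noteq> 0"
    and "\<forall>d. \<bar>g $ d\<bar> \<le> \<bar>g $ m\<bar>"
  defines "p1 \<equiv> (\<Sum>d\<in>UNIV. I12 \<alpha> g m $ d $ d)"
    and "\<Delta>x12 \<equiv> - ((\<alpha> / l1norm (I12 \<alpha> g m *v g) + (1 - \<alpha>) / norm (I12 \<alpha> g m *v g)) *\<^sub>R (I12 \<alpha> g m *v g))"
  shows "0.61 < 1 - \<alpha> * (1 - \<alpha>) * (2 - \<alpha>) * (1 - 1 / p1)
    \<and> 1 - \<alpha> * (1 - \<alpha>) * (2 - \<alpha>) * (1 - 1 / p1) \<le> h_alpha \<alpha> \<Delta>x12
    \<and> h_alpha \<alpha> \<Delta>x12 \<le> 1 + \<alpha> * (1 - \<alpha>) * (sqrt p1 - 1)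
    \<and> 1 + \<alpha> * (1 - \<alpha>) * (sqrt p1 - 1) \<le> 1 + (sqrt p1 - 1) / 4"
proof -
  define S where "S = {d. \<alpha> * \<bar>g $ m\<bar> \<le> \<bar>g $ d\<bar>}"
  define v where "v = I12 \<alpha> g m *v g"
  have "g $ m \<noteq> 0" using assms(3,4) by (auto simp: vec_eq_iff)
  moreover have "m \<in> S" using assms(1,2) by (simp add: S_def mult_left_le_one_le)
  ultimately have "v \<noteq> 0" by (auto simp: v_def I12_mult_vec S_def vec_eq_iff)
  moreover have "\<And>i. i \<notin> S \<Longrightarrow> v $ i = 0" by (simp add: v_def I12_mult_vec S_def)
  moreover have "p1 = card S" by (simp add: p1_def trace_I12 S_def)
  moreover have "\<Delta>x12 = elastic_step \<alpha> v" by (simp add: \<Delta>x12_def v_def elastic_step_def)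
  ultimately have "1 - \<alpha> * (1 - \<alpha>) * (2 - \<alpha>) * (1 - 1 / p1) \<le> h_alpha \<alpha> \<Delta>x12"
      "h_alpha \<alpha> \<Delta>x12 \<le> 1 + \<alpha> * (1 - \<alpha>) * (sqrt p1 - 1)"
    using h_alpha_elastic_step_bounds[OF assms(1,2)] by blast+
  moreover have "1 \<le> p1" using \<open>m \<in> S\<close> \<open>p1 = card S\<close> by (auto simp: Suc_le_eq card_gt_0_iff)
  then have "\<alpha> * (1 - \<alpha>) * (2 - \<alpha>) * (1 - 1 / p1) \<le> \<alpha> * (1 - \<alpha>) * (2 - \<alpha>)"
    using assms(1,2) by (intro mult_left_le) auto
  moreover have "\<alpha> * (1 - \<alpha>) * (2 - \<alpha>) < 39 / 100" using assms(1,2) by (rule unit_interval_cubic_less)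
  moreover have "\<alpha> * (1 - \<alpha>) * (sqrt p1 - 1) \<le> 1 / 4 * (sqrt p1 - 1)"
    using mult_one_minus_le_quarter \<open>1 \<le> p1\<close> by (intro mult_right_mono) auto
  moreover have "0.61 = (61 / 100 :: real)" by simp
  ultimately show ?thesis by (intro conjI) linarith+
qed

end
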